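(* Let $A$ be a unital ring and $n\in\mathbb N$. Then $\operatorname{sr}(A)\le n$ if and only if the skew corner $1_A M_n(A)=1_AM_n(A)(n\cdot 1_A)$ has stable rank $1$ (in the sense of skew corners).
   Context: For idempotents $p,q$ in a unital ring $R$, the skew corner $pRq$ has (right) stable rank $1$, written $\operatorname{sr}(pRq)=1$, if whenever $a\in pRq$, $x\in qRp$, $b\in pRp$ satisfy $ax+b=p$, there exist $y\in pRq$, $z\in qRp$ with $(a+by)z=p$. $M_n(A)$ is identified with the upper left $n\times n$ corner of $M_{n+m}(A)$; in particular $A=M_1(A)$ sits in $M_n(A)$ as the corner at the matrix unit $e_{11}$, so $1_A=e_{11}$, and $n\cdot 1_A=\mathrm{diag}(1,\dots,1)$ is the identity of $M_n(A)$. The (Bass) stable rank $\operatorname{sr}(A)$ is the least positive integer $n$ such that for every $(a_1,\dots,a_n,b)\in A^{n+1}$ with $\sum a_iA+bA=A$ there exist $c_i\in A$ with $\sum_i (a_i+bc_i)A=A$, or $\infty$ if none exists. *)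

theory Defs
  imports "Jordan_Normal_Form.Matrix" "HOL-Library.Extended_Nat"
begin

definition bass_cond :: "'a::ring_1 itself \<Rightarrow> nat \<Rightarrow> bool" where
  "bass_cond T m \<longleftrightarrow>
     (\<forall>(a::nat \<Rightarrow> 'a) (b::'a).
        (\<exists>r s. (\<Sum>i<m. a i * r i) + b * s = 1) \<longrightarrow>
        (\<exists>c r. (\<Sum>i<m. (a i + b * c i) * r i) = 1))"

definition stable_rank :: "'a::ring_1 itself \<Rightarrow> enat" where
  "stable_rank T = (if \<exists>m\<ge>1. bass_cond T m
                     then enat (LEAST m. m \<ge> 1 \<and> bass_cond T m) else \<infinity>)"

(* the matrix unit e_11 in M_n(A), i.e. 1_A sitting in the corner *)
definition e11 :: "nat \<Rightarrow> 'a::ring_1 mat" where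
  "e11 n = mat n n (\<lambda>(i,j). if i = 0 \<and> j = 0 then 1 else 0)"

definition corner :: "nat \<Rightarrow> 'a::ring_1 mat \<Rightarrow> 'a mat \<Rightarrow> 'a mat set" where
  "corner n p q = {p * r * q | r. r \<in> carrier_mat n n}"

definition sr1_skew_corner :: "nat \<Rightarrow> 'a::ring_1 mat \<Rightarrow> 'a mat \<Rightarrow> bool" where
  "sr1_skew_corner n p q \<longleftrightarrow>
     (\<forall>a\<in>corner n p q. \<forall>x\<in>corner n q p. \<forall>b\<in>corner n p p.
        a * x + b = p \<longrightarrow>
        (\<exists>y\<in>corner n p q. \<exists>z\<in>corner n q p. (a + b * y) * z = p))"

end

theory Submission
  imports Defs
begin

(* In M_n(A) the corner e11 M_n(A) consists of the matrices supported on the first row,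
   M_n(A) e11 of those supported on the first column, and e11 M_n(A) e11 of the multiples of
   e11. Hence the skew-corner condition for e11 M_n(A) is literally Bass's condition for
   unimodular (n+1)-rows whose last coefficient is 1; this normalisation is harmless, since
   b s can be used in place of b. Bass's condition passes from level m to m + 1, so
   sr(A) <= n holds exactly when the condition holds at level n. *)

definition row_mat :: "nat \<Rightarrow> (nat \<Rightarrow> 'a::ring_1) \<Rightarrow> 'a mat" where
  "row_mat n v = mat n n (\<lambda>(i,j). if i = 0 then v j else 0)"

definition col_mat :: "nat \<Rightarrow> (nat \<Rightarrow> 'a::ring_1) \<Rightarrow> 'a mat" where
  "col_mat n v = mat n n (\<lambda>(i,j). if j = 0 then v i else 0)"

definition corner_mat :: "nat \<Rightarrow> 'a::ring_1 \<Rightarrow> 'a mat" where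
  "corner_mat n c = mat n n (\<lambda>(i,j). if i = 0 \<and> j = 0 then c else 0)"

lemma e11_eq_corner_mat: "e11 n = corner_mat n 1"
  by (simp add: e11_def corner_mat_def)

lemma corner_mat_index_0_0: "0 < n \<Longrightarrow> corner_mat n c $$ (0, 0) = c"
  by (simp add: corner_mat_def)

lemma corner_mat_inject: "0 < n \<Longrightarrow> corner_mat n c = corner_mat n d \<longleftrightarrow> c = d"
  by (metis corner_mat_index_0_0)

lemma row_mat_dims[simp]: "dim_row (row_mat n v) = n" "dim_col (row_mat n v) = n"
  by (simp_all add: row_mat_def)

lemma col_mat_dims[simp]: "dim_row (col_mat n v) = n" "dim_col (col_mat n v) = n"
  by (simp_all add: col_mat_def)

lemma row_mat_carrier[simp]: "row_mat n v \<in> carrier_mat n n"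
  by (simp add: row_mat_def)

lemma col_mat_carrier[simp]: "col_mat n v \<in> carrier_mat n n"
  by (simp add: col_mat_def)

lemma corner_mat_carrier[simp]: "corner_mat n c \<in> carrier_mat n n"
  by (simp add: corner_mat_def)

lemma sum_lessThan_eq_at_0:
  fixes f :: "nat \<Rightarrow> 'a::comm_monoid_add"
  assumes "0 < n" "\<And>k. 0 < k \<Longrightarrow> f k = 0"
  shows "(\<Sum>k<n. f k) = f 0"
  using assms by (subst sum.mono_neutral_right[of "{..<n}" "{0}"]) auto

lemma row_mat_mult_col_mat:
  "row_mat n v * col_mat n w = corner_mat n (\<Sum>k<n. v k * w k)"
  by (rule eq_matI) (auto simp: row_mat_def col_mat_def corner_mat_def scalar_prod_def atLeast0LessThan)

lemma corner_mat_mult_row_mat: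
  "corner_mat n c * row_mat n v = row_mat n (\<lambda>j. c * v j)"
  by (rule eq_matI) (auto simp: row_mat_def corner_mat_def scalar_prod_def atLeast0LessThan sum_lessThan_eq_at_0)

lemma row_mat_add: "row_mat n v + row_mat n w = row_mat n (\<lambda>j. v j + w j)"
  by (rule eq_matI) (auto simp: row_mat_def)

lemma corner_mat_add: "corner_mat n c + corner_mat n d = corner_mat n (c + d)"
  by (rule eq_matI) (auto simp: corner_mat_def)

lemma e11_mult: "M \<in> carrier_mat n n \<Longrightarrow> e11 n * M = row_mat n (\<lambda>j. M $$ (0, j))"
  by (rule eq_matI) (auto simp: row_mat_def e11_def scalar_prod_def atLeast0LessThan sum_lessThan_eq_at_0)

lemma mult_e11: "M \<in> carrier_mat n n \<Longrightarrow> M * e11 n = col_mat n (\<lambda>i. M $$ (i, 0))"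
  by (rule eq_matI) (auto simp: col_mat_def e11_def scalar_prod_def atLeast0LessThan sum_lessThan_eq_at_0)

lemma row_mat_mult_e11: "row_mat n v * e11 n = corner_mat n (v 0)"
  by (rule eq_matI) (auto simp: row_mat_def corner_mat_def e11_def scalar_prod_def atLeast0LessThan sum_lessThan_eq_at_0)

lemma e11_mult_row_mat: "e11 n * row_mat n v = row_mat n v"
  by (rule eq_matI) (auto simp: row_mat_def e11_def scalar_prod_def atLeast0LessThan sum_lessThan_eq_at_0)

lemma col_mat_mult_e11: "col_mat n v * e11 n = col_mat n v"
  by (rule eq_matI) (auto simp: col_mat_def e11_def scalar_prod_def atLeast0LessThan sum_lessThan_eq_at_0)

lemma e11_mult_corner_mat_mult_e11: "e11 n * corner_mat n c * e11 n = corner_mat n c"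
  by (rule eq_matI) (auto simp: corner_mat_def e11_def scalar_prod_def atLeast0LessThan sum_lessThan_eq_at_0)

lemma corner_e11_one: "corner n (e11 n) (1\<^sub>m n) = range (row_mat n)"
proof (intro equalityI subsetI)
  fix M assume "M \<in> corner n (e11 n) (1\<^sub>m n)"
  then obtain r where "r \<in> carrier_mat n n" "M = e11 n * r * 1\<^sub>m n"
    unfolding corner_def by blast
  then have "M = row_mat n (\<lambda>j. r $$ (0, j))"
    by (simp add: e11_mult)
  then show "M \<in> range (row_mat n)" by blast
next
  fix M assume "M \<in> range (row_mat n)"
  then obtain v where M: "M = row_mat n v" by blast
  show "M \<in> corner n (e11 n) (1\<^sub>m n)"
    unfolding corner_def M
    by (intro CollectI exI[of _ "row_mat n v"] conjI) (simp_all add: e11_mult_row_mat)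
qed

lemma corner_one_e11: "corner n (1\<^sub>m n) (e11 n) = range (col_mat n)"
proof (intro equalityI subsetI)
  fix M assume "M \<in> corner n (1\<^sub>m n) (e11 n)"
  then obtain r where "r \<in> carrier_mat n n" "M = 1\<^sub>m n * r * e11 n"
    unfolding corner_def by blast
  then have "M = col_mat n (\<lambda>i. r $$ (i, 0))"
    by (simp add: mult_e11)
  then show "M \<in> range (col_mat n)" by blast
next
  fix M assume "M \<in> range (col_mat n)"
  then obtain v where M: "M = col_mat n v" by blast
  show "M \<in> corner n (1\<^sub>m n) (e11 n)"
    unfolding corner_def M
    by (intro CollectI exI[of _ "col_mat n v"] conjI) (simp_all add: col_mat_mult_e11)
qed

lemma corner_e11_e11: "corner n (e11 n) (e11 n) = range (corner_mat n)"
proof (intro equalityI subsetI)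
  fix M assume "M \<in> corner n (e11 n) (e11 n)"
  then obtain r where "r \<in> carrier_mat n n" "M = e11 n * r * e11 n"
    unfolding corner_def by blast
  then have "M = corner_mat n (r $$ (0, 0))"
    by (simp add: e11_mult row_mat_mult_e11)
  then show "M \<in> range (corner_mat n)" by blast
next
  fix M assume "M \<in> range (corner_mat n)"
  then obtain c where M: "M = corner_mat n c" by blast
  show "M \<in> corner n (e11 n) (e11 n)"
    unfolding corner_def M
    by (intro CollectI exI[of _ "corner_mat n c"] conjI) (simp_all add: e11_mult_corner_mat_mult_e11)
qed

lemma bass_cond_iff_unit_coeff:
  "bass_cond TYPE('a::ring_1) m \<longleftrightarrow>
     (\<forall>(a::nat \<Rightarrow> 'a) x b. (\<Sum>i<m. a i * x i) + b = 1 \<longrightarrow>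
        (\<exists>c r. (\<Sum>i<m. (a i + b * c i) * r i) = 1))"
proof
  assume "bass_cond TYPE('a) m"
  then show "\<forall>(a::nat \<Rightarrow> 'a) x b. (\<Sum>i<m. a i * x i) + b = 1 \<longrightarrow>
      (\<exists>c r. (\<Sum>i<m. (a i + b * c i) * r i) = 1)"
    unfolding bass_cond_def by (metis mult.right_neutral)
next
  assume unit: "\<forall>(a::nat \<Rightarrow> 'a) x b. (\<Sum>i<m. a i * x i) + b = 1 \<longrightarrow>
      (\<exists>c r. (\<Sum>i<m. (a i + b * c i) * r i) = 1)"
  show "bass_cond TYPE('a) m"
    unfolding bass_cond_def
  proof (intro allI impI)
    fix a :: "nat \<Rightarrow> 'a" and b
    assume "\<exists>r s. (\<Sum>i<m. a i * r i) + b * s = 1"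
    then obtain r s where "(\<Sum>i<m. a i * r i) + b * s = 1" by blast
    then obtain c t where "(\<Sum>i<m. (a i + b * s * c i) * t i) = 1"
      using unit by blast
    then have "(\<Sum>i<m. (a i + b * (s * c i)) * t i) = 1"
      by (simp add: mult.assoc)
    then show "\<exists>c r. (\<Sum>i<m. (a i + b * c i) * r i) = 1"
      by (intro exI[of _ "\<lambda>i. s * c i"] exI[of _ t])
  qed
qed

lemma sr1_skew_corner_e11_iff_bass_cond:
  assumes "0 < n"
  shows "sr1_skew_corner n (e11 n :: 'a::ring_1 mat) (1\<^sub>m n) \<longleftrightarrow> bass_cond TYPE('a) n"
proof -
  have hyp: "row_mat n a * col_mat n x + corner_mat n b =
      corner_mat n ((\<Sum>i<n. a i * x i) + b)" for a x and b :: 'a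
    by (simp add: row_mat_mult_col_mat corner_mat_add)
  have concl: "(row_mat n a + corner_mat n b * row_mat n y) * col_mat n z =
      corner_mat n (\<Sum>i<n. (a i + b * y i) * z i)" for a y z and b :: 'a
    by (simp add: corner_mat_mult_row_mat row_mat_add row_mat_mult_col_mat)
  show ?thesis
    unfolding sr1_skew_corner_def corner_e11_one corner_one_e11 corner_e11_e11
      bass_cond_iff_unit_coeff
    by (simp add: hyp concl e11_eq_corner_mat corner_mat_inject[OF assms])
qed

lemma bass_cond_Suc:
  assumes bass: "bass_cond TYPE('a::ring_1) m"
  shows "bass_cond TYPE('a) (Suc m)"
  unfolding bass_cond_def
proof (intro allI impI)
  fix a :: "nat \<Rightarrow> 'a" and b :: 'a
  assume "\<exists>r s. (\<Sum>i<Suc m. a i * r i) + b * s = 1"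
  then obtain r s where rs: "(\<Sum>i<Suc m. a i * r i) + b * s = 1" by blast
  \<comment> \<open>merge a m into the last entry, shorten at level m, and split the merged entry again\<close>
  define b' where "b' = a m * r m + b * s"
  have "(\<Sum>i<m. a i * r i) + b' * 1 = 1" using rs by (simp add: b'_def add.assoc)
  then obtain c t where ct: "(\<Sum>i<m. (a i + b' * c i) * t i) = 1"
    using bass unfolding bass_cond_def by blast
  define c' where "c' = (\<lambda>i. if i < m then s * c i else 0)"
  define t' where "t' = (\<lambda>i. if i < m then t i else (\<Sum>i<m. r m * c i * t i))"
  have "(\<Sum>i<Suc m. (a i + b * c' i) * t' i)
      = (\<Sum>i<m. (a i + b * (s * c i)) * t i) + a m * (\<Sum>i<m. r m * c i * t i)"
    by (simp add: c'_def t'_def)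
  also have "\<dots> = (\<Sum>i<m. (a i + b * (s * c i)) * t i + a m * (r m * c i * t i))"
    by (simp add: sum_distrib_left sum.distrib)
  also have "\<dots> = (\<Sum>i<m. (a i + b' * c i) * t i)"
    by (rule sum.cong) (simp_all add: b'_def algebra_simps)
  also have "\<dots> = 1" by (rule ct)
  finally show "\<exists>c r. (\<Sum>i<Suc m. (a i + b * c i) * r i) = 1" by blast
qed

lemma bass_cond_mono:
  assumes "bass_cond TYPE('a::ring_1) m" "m \<le> k"
  shows "bass_cond TYPE('a) k"
  using assms(2,1) by (induction k rule: dec_induct) (simp_all add: bass_cond_Suc)

lemma stable_rank_le_enat_iff:
  assumes "1 \<le> n"
  shows "stable_rank TYPE('a::ring_1) \<le> enat n \<longleftrightarrow> bass_cond TYPE('a) n"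
proof
  assume le: "stable_rank TYPE('a) \<le> enat n"
  then have ex: "\<exists>m\<ge>1. bass_cond TYPE('a) m"
    by (auto simp: stable_rank_def split: if_splits)
  define m where "m = (LEAST m. m \<ge> 1 \<and> bass_cond TYPE('a) m)"
  have "bass_cond TYPE('a) m"
    unfolding m_def using LeastI_ex[OF ex] by blast
  moreover have "m \<le> n"
    using le ex by (simp add: stable_rank_def m_def)
  ultimately show "bass_cond TYPE('a) n"
    by (rule bass_cond_mono)
next
  assume "bass_cond TYPE('a) n"
  then have "(LEAST m. m \<ge> 1 \<and> bass_cond TYPE('a) m) \<le> n"
    using assms by (intro Least_le) simp
  with \<open>bass_cond TYPE('a) n\<close> show "stable_rank TYPE('a) \<le> enat n"
    using assms by (auto simp: stable_rank_def)
qed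

theorem lemma1:
  fixes n :: nat
  assumes "n \<ge> 1"
  shows "stable_rank TYPE('a::ring_1) \<le> enat n \<longleftrightarrow>
         sr1_skew_corner n (e11 n :: 'a mat) (1\<^sub>m n)"
  using assms by (simp add: stable_rank_le_enat_iff sr1_skew_corner_e11_iff_bass_cond)

end
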